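(* Let $I=(x_1,\ldots,x_n)$ be a list of items with sizes $x_i\in(1/3,1]$, and let $I'=(x'_1,\ldots,x'_n)$ be a list of items with sizes in $(0,1]$ obtained from $I$ by increasing the sizes of one or more items, i.e. $x'_i\ge x_i$ for all $i$. Then $\mathrm{BF}(I)\le \mathrm{BF}(I')$.
   Context: The online algorithm Best Fit (BF) processes a list of items with sizes in $(0,1]$ in the given order and packs the current item into the fullest bin (largest current load, i.e. sum of sizes of items in it) into which it fits without exceeding total size $1$, opening a new unit-capacity bin if it fits into no existing bin; items are never moved. $\mathrm{BF}(I)$ denotes the number of bins Best Fit uses on list $I$. *)

theory Defs
  imports Complex_Main
begin

text \<open>The state is the list of current bin loads (in order of opening).
  An item of size x goes into a bin of largest load among those with load + x \<le> 1
  (ties broken by the lowest index; the resulting multiset of loads, and hence the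
  number of bins, does not depend on the tie-breaking); if no bin fits, a new bin
  with load x is opened.\<close>

definition bf_step :: "real list \<Rightarrow> real \<Rightarrow> real list" where
  "bf_step loads x =
    (let fits = [i \<leftarrow> [0..<length loads]. loads ! i + x \<le> 1] in
     if fits = [] then loads @ [x]
     else (let m = Max (set (map (\<lambda>i. loads ! i) fits));
               j = hd [i \<leftarrow> fits. loads ! i = m]
           in loads[j := loads ! j + x]))"

definition bf_loads :: "real list \<Rightarrow> real list" where
  "bf_loads xs = foldl bf_step [] xs"

definition BF :: "real list \<Rightarrow> nat" where
  "BF xs = length (bf_loads xs)"

end

theory Submission
  imports Defs
begin

text \<open>Run Best Fit on \<open>I\<close> and \<open>I'\<close> in parallel, with load lists \<open>L\<close> and \<open>L'\<close>.
  Since all items exceed 1/3, every load exceeds 1/3, a bin that received a second item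
  has load above 2/3, and any two bins of \<open>L'\<close> together exceed capacity 1. With the
  surplus \<open>k = |L'| - |L|\<close>, the invariant is \<open>k \<ge> 0\<close> together with: for every \<open>c < 2/3\<close>,
  \<open>L'\<close> has at most \<open>2k\<close> more bins of load \<open>\<le> c\<close> than \<open>L\<close>. The critical step is when
  \<open>I\<close> opens a bin while \<open>I'\<close> does not: no bin of \<open>L\<close> has load \<open>\<le> 1 - x\<close>, but the bin
  of \<open>L'\<close> receiving \<open>x' \<ge> x\<close> does, so the invariant at that level forces \<open>k \<ge> 1\<close>.\<close>

lemma bf_step_cases:
  obtains (opens) "\<forall>l\<in>set L. 1 < l + x" "bf_step L x = L @ [x]"
  | (fits) j where "j < length L" "L ! j + x \<le> 1" "\<forall>l\<in>set L. l + x \<le> 1 \<longrightarrow> l \<le> L ! j"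
      "bf_step L x = L[j := L ! j + x]"
proof (cases "\<exists>l\<in>set L. l + x \<le> 1")
  case False
  then have "[i \<leftarrow> [0..<length L]. L ! i + x \<le> 1] = []"
    by (auto simp: filter_empty_conv)
  with False show ?thesis
    using opens by (force simp: bf_step_def)
next
  case True
  define fits where "fits = [i \<leftarrow> [0..<length L]. L ! i + x \<le> 1]"
  define m where "m = Max (set (map (\<lambda>i. L ! i) fits))"
  define j where "j = hd [i \<leftarrow> fits. L ! i = m]"
  have "fits \<noteq> []"
    using True by (fastforce simp: fits_def filter_empty_conv in_set_conv_nth)
  then have "m \<in> set (map (\<lambda>i. L ! i) fits)"
    unfolding m_def by (intro Max_in) auto
  then have "j \<in> set [i \<leftarrow> fits. L ! i = m]"
    unfolding j_def by (intro hd_in_set) (auto simp: filter_empty_conv)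
  then have j: "j < length L" "L ! j + x \<le> 1" "L ! j = m"
    by (auto simp: fits_def)
  have "l \<le> L ! j" if "l \<in> set L" "l + x \<le> 1" for l
  proof -
    have "l \<in> set (map (\<lambda>i. L ! i) fits)"
      using that by (auto simp: fits_def in_set_conv_nth)
    then show ?thesis
      unfolding j(3) m_def by simp
  qed
  moreover have "bf_step L x = L[j := L ! j + x]"
    using \<open>fits \<noteq> []\<close>
    unfolding bf_step_def Let_def fits_def[symmetric] m_def[symmetric] j_def[symmetric] by simp
  ultimately show ?thesis
    using fits j by blast
qed

lemma bf_loads_snoc: "bf_loads (xs @ [x]) = bf_step (bf_loads xs) x"
  by (simp add: bf_loads_def)

lemma bf_step_loads_gt:
  assumes "0 \<le> a" "\<forall>l\<in>set L. a < l" "a < x"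
  shows "\<forall>l\<in>set (bf_step L x). a < l"
proof (cases L x rule: bf_step_cases)
  case (fits j)
  have "a < L ! j + x"
    using assms nth_mem[OF fits(1)] by force
  then show ?thesis
    using assms(2) set_update_subset_insert[of L j] unfolding fits(4) by blast
qed (use assms in simp)

lemma bf_loads_gt:
  assumes "0 \<le> a" "\<forall>x\<in>set xs. a < x"
  shows "\<forall>l\<in>set (bf_loads xs). a < l"
  using assms(2)
  by (induction xs rule: rev_induct)
    (auto simp: bf_loads_snoc bf_loads_def intro: bf_step_loads_gt[OF assms(1), rule_format])

definition no_two_fit :: "real list \<Rightarrow> bool" where
  "no_two_fit L \<longleftrightarrow> (\<forall>i<length L. \<forall>j<length L. i \<noteq> j \<longrightarrow> 1 < L ! i + L ! j)"

lemma no_two_fitD: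
  "no_two_fit L \<Longrightarrow> i < length L \<Longrightarrow> j < length L \<Longrightarrow> i \<noteq> j \<Longrightarrow> 1 < L ! i + L ! j"
  by (simp add: no_two_fit_def)

lemma no_two_fit_snoc:
  "no_two_fit L \<Longrightarrow> \<forall>l\<in>set L. 1 < l + x \<Longrightarrow> no_two_fit (L @ [x])"
  unfolding no_two_fit_def
  by (auto simp: nth_append less_Suc_eq add.commute dest: nth_mem)

lemma no_two_fit_update:
  assumes "no_two_fit L" "\<forall>l\<in>set L. 1/3 < l" "1/3 < x" "j < length L"
  shows "no_two_fit (L[j := L ! j + x])"
  unfolding no_two_fit_def
proof (intro allI impI)
  fix i i'
  assume "i < length (L[j := L ! j + x])" "i' < length (L[j := L ! j + x])" "i \<noteq> i'"
  moreover have "1/3 < L ! j" "1/3 < L ! i" "1/3 < L ! i'"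
    using assms calculation by auto
  ultimately show "1 < L[j := L ! j + x] ! i + L[j := L ! j + x] ! i'"
    using assms(1,3) unfolding no_two_fit_def
    by (cases "i = j"; cases "i' = j") (auto simp: nth_list_update)
qed

lemma bf_loads_no_two_fit:
  assumes "\<forall>x\<in>set xs. 1/3 < x"
  shows "no_two_fit (bf_loads xs)"
  using assms
proof (induction xs rule: rev_induct)
  case Nil
  then show ?case
    by (simp add: bf_loads_def no_two_fit_def)
next
  case (snoc x xs)
  have "\<forall>l\<in>set (bf_loads xs). 1/3 < l"
    using snoc.prems by (intro bf_loads_gt) auto
  with snoc show ?case
    by (cases "bf_loads xs" x rule: bf_step_cases)
      (auto simp: bf_loads_snoc intro: no_two_fit_snoc no_two_fit_update)
qed

definition nbins_le :: "real \<Rightarrow> real list \<Rightarrow> nat" where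
  "nbins_le c L = length (filter (\<lambda>l. l \<le> c) L)"

lemma nbins_le_snoc: "nbins_le c (L @ [x]) = nbins_le c L + (if x \<le> c then 1 else 0)"
  by (simp add: nbins_le_def)

lemma nbins_le_update_above:
  "j < length L \<Longrightarrow> c < v \<Longrightarrow> nbins_le c (L[j := v]) + (if L ! j \<le> c then 1 else 0) = nbins_le c L"
proof (induction L arbitrary: j)
  case (Cons a L)
  then show ?case
    by (cases j) (auto simp: nbins_le_def)
qed simp

lemma nbins_le_eq_0_iff: "nbins_le c L = 0 \<longleftrightarrow> (\<forall>l\<in>set L. c < l)"
  by (auto simp: nbins_le_def filter_empty_conv)

lemma nbins_le_strict_mono:
  assumes "v \<in> set L" "c < v" "v \<le> d"
  shows "nbins_le c L < nbins_le d L"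
proof -
  have "filter (\<lambda>l. l \<le> c) L = filter (\<lambda>l. l \<le> c) (filter (\<lambda>l. l \<le> d) L)"
    using assms by (auto intro: filter_cong)
  moreover have
    "length (filter (\<lambda>l. l \<le> c) (filter (\<lambda>l. l \<le> d) L)) < length (filter (\<lambda>l. l \<le> d) L)"
    using assms by (intro length_filter_less[of v]) auto
  ultimately show ?thesis
    by (simp add: nbins_le_def)
qed

lemma nbins_le_eq_if_no_load_between:
  assumes "\<forall>l\<in>set L. l \<le> d \<longrightarrow> l \<le> c" "c \<le> d"
  shows "nbins_le d L = nbins_le c L"
  unfolding nbins_le_def using assms by (metis (no_types, lifting) filter_cong order.trans)

definition small_bins_within_surplus :: "real list \<Rightarrow> real list \<Rightarrow> bool" where
  "small_bins_within_surplus L L' \<longleftrightarrow> length L \<le> length L' \<and>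
     (\<forall>c < 2/3. nbins_le c L' \<le> nbins_le c L + 2 * (length L' - length L))"

context
  fixes L L' :: "real list" and x x' :: real
  assumes loads_gt: "\<forall>l\<in>set L. 1/3 < l" and loads'_gt: "\<forall>l\<in>set L'. 1/3 < l"
    and no_two_fit': "no_two_fit L'"
    and item_gt: "1/3 < x" and item_le: "x \<le> x'"
    and surplus_length: "length L \<le> length L'"
    and surplus_count: "\<And>c. c < 2/3 \<Longrightarrow> nbins_le c L' \<le> nbins_le c L + 2 * (length L' - length L)"
begin

lemma filled_load_gt:
  shows "j < length L \<Longrightarrow> 2/3 < L ! j + x" and "j' < length L' \<Longrightarrow> 2/3 < L' ! j' + x'"
  using loads_gt loads'_gt item_gt item_le nth_mem by fastforce+

lemma small_bins_within_surplus_fit_fit: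
  assumes j: "j < length L" "\<forall>l\<in>set L. l + x \<le> 1 \<longrightarrow> l \<le> L ! j"
    and j': "j' < length L'" "L' ! j' + x' \<le> 1"
  shows "small_bins_within_surplus (L[j := L ! j + x]) (L'[j' := L' ! j' + x'])"
proof -
  have "nbins_le c (L'[j' := L' ! j' + x'])
      \<le> nbins_le c (L[j := L ! j + x]) + 2 * (length L' - length L)" if c: "c < 2/3" for c
  proof -
    have fill: "nbins_le c (L[j := L ! j + x]) + (if L ! j \<le> c then 1 else 0) = nbins_le c L"
        "nbins_le c (L'[j' := L' ! j' + x']) + (if L' ! j' \<le> c then 1 else 0) = nbins_le c L'"
      using c filled_load_gt(1)[OF j(1)] filled_load_gt(2)[OF j'(1)]
      by (simp_all add: nbins_le_update_above j(1) j'(1))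
    show ?thesis
    proof (cases "L ! j \<le> c \<and> c < L' ! j'")
      case True
      \<comment> \<open>Best Fit: every load of \<open>L\<close> up to \<open>L' ! j' \<le> 1 - x\<close> fits \<open>x\<close>, hence is at most \<open>L ! j\<close>\<close>
      have "nbins_le (L' ! j') L = nbins_le c L"
        using j(2) j'(2) item_le True by (intro nbins_le_eq_if_no_load_between) force+
      moreover have "nbins_le c L' < nbins_le (L' ! j') L'"
        using True j'(1) by (intro nbins_le_strict_mono[of "L' ! j'"]) auto
      moreover have "nbins_le (L' ! j') L' \<le> nbins_le (L' ! j') L + 2 * (length L' - length L)"
        using j'(2) item_gt item_le by (intro surplus_count) auto
      ultimately show ?thesis
        using fill c True by auto
    next
      case False
      then show ?thesis
        using fill c surplus_count[OF c] by (auto split: if_splits)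
    qed
  qed
  with surplus_length show ?thesis
    by (simp add: small_bins_within_surplus_def)
qed

lemma small_bins_within_surplus_fit_open:
  assumes "j < length L"
  shows "small_bins_within_surplus (L[j := L ! j + x]) (L' @ [x'])"
proof -
  have "nbins_le c (L' @ [x'])
      \<le> nbins_le c (L[j := L ! j + x]) + 2 * (Suc (length L') - length L)" if c: "c < 2/3" for c
    using nbins_le_update_above[OF assms, of c "L ! j + x"] filled_load_gt(1)[OF assms] c
      surplus_count[OF c] surplus_length
    by (auto simp: nbins_le_snoc split: if_splits)
  with surplus_length show ?thesis
    by (simp add: small_bins_within_surplus_def)
qed

lemma small_bins_within_surplus_open_open:
  "small_bins_within_surplus (L @ [x]) (L' @ [x'])"
  unfolding small_bins_within_surplus_def
  using surplus_length surplus_count item_le by (fastforce simp: nbins_le_snoc)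

\<comment> \<open>a small load sits in a bin other than \<open>j'\<close>, which did not fit \<open>x' \<ge> x\<close>\<close>
lemma small_load_after_fill_gt:
  assumes j': "j' < length L'" "L' ! j' + x' \<le> 1"
    and "l \<in> set (L'[j' := L' ! j' + x'])" "l \<le> 2/3"
  shows "x < l"
proof -
  obtain i where i: "i < length L'" "L'[j' := L' ! j' + x'] ! i = l"
    using assms(3) by (auto simp: in_set_conv_nth)
  then have "i \<noteq> j'"
    using assms(4) filled_load_gt(2)[OF j'(1)] by auto
  then have "1 < l + L' ! j'"
    using i no_two_fitD[OF no_two_fit' i(1) j'(1)] by simp
  then show ?thesis
    using j'(2) item_le by simp
qed

lemma small_bins_within_surplus_open_fit:
  assumes no_fit: "\<forall>l\<in>set L. 1 < l + x"
    and j': "j' < length L'" "L' ! j' + x' \<le> 1"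
  shows "small_bins_within_surplus (L @ [x]) (L'[j' := L' ! j' + x'])"
proof -
  define a where "a = L' ! j'"
  define M' where "M' = L'[j' := a + x']"
  have none: "nbins_le a L = 0"
    using no_fit j'(2) item_le by (force simp: nbins_le_eq_0_iff a_def)
  have count_a: "nbins_le a L' \<le> 2 * (length L' - length L)"
    using surplus_count[of a] none j'(2) item_gt item_le by (simp add: a_def)
  moreover have "0 < nbins_le a L'"
    using nbins_le_eq_0_iff[of a L'] nth_mem[OF j'(1)] by (auto simp: a_def)
  ultimately have surplus_pos: "length L < length L'"
    by simp
  have "nbins_le c M' \<le> nbins_le c (L @ [x]) + 2 * (length L' - Suc (length L))"
    if c: "c < 2/3" for c
  proof -
    have fill: "nbins_le c M' + (if a \<le> c then 1 else 0) = nbins_le c L'"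
      using c filled_load_gt(2)[OF j'(1)] by (simp add: nbins_le_update_above j'(1) M'_def a_def)
    have "nbins_le c M' < nbins_le c L + 2 * (length L' - length L)"
    proof (cases "a \<le> c")
      case True
      then show ?thesis
        using fill surplus_count[OF c] surplus_pos by simp
    next
      case False
      then have "nbins_le c L' < nbins_le a L'"
        using j'(1) by (intro nbins_le_strict_mono[of a]) (auto simp: a_def)
      then show ?thesis
        using fill False count_a by simp
    qed
    moreover have "x < l" if "l \<in> set M'" "l \<le> c" for l
      using small_load_after_fill_gt[OF j' that(1)[unfolded M'_def a_def]] that(2) c by simp
    then have "x \<le> c \<or> nbins_le c M' = 0"
      unfolding nbins_le_eq_0_iff by (meson less_imp_le not_less order.strict_trans2)
    ultimately show ?thesis
      using surplus_pos by (auto simp: nbins_le_snoc)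
  qed
  with surplus_pos show ?thesis
    by (simp add: small_bins_within_surplus_def M'_def a_def)
qed

lemma small_bins_within_surplus_bf_step:
  "small_bins_within_surplus (bf_step L x) (bf_step L' x')"
proof (cases L x rule: bf_step_cases)
  case opens
  then show ?thesis
    using bf_step_cases[of L' x'] small_bins_within_surplus_open_open small_bins_within_surplus_open_fit
    by metis
next
  case (fits j)
  then show ?thesis
    using bf_step_cases[of L' x'] small_bins_within_surplus_fit_open small_bins_within_surplus_fit_fit
    by metis
qed

end

lemma bf_loads_small_bins_within_surplus:
  assumes "list_all2 (\<le>) xs ys" "\<forall>x\<in>set xs. 1/3 < x"
  shows "small_bins_within_surplus (bf_loads xs) (bf_loads ys)"
  using assms
proof (induction xs ys rule: rev_induct2)
  case (4 x xs y ys)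
  then have "length xs = length ys"
    using list_all2_lengthD by force
  with 4 have le: "list_all2 (\<le>) xs ys" "x \<le> y" and gt: "\<forall>x\<in>set xs. 1/3 < x" "1/3 < x"
    by (auto simp: list_all2_append)
  have "\<forall>y\<in>set ys. 1/3 < y"
  proof
    fix y
    assume "y \<in> set ys"
    then obtain i where "i < length ys" "ys ! i = y"
      by (auto simp: in_set_conv_nth)
    then show "1/3 < y"
      using list_all2_nthD2[OF le(1)] list_all2_lengthD[OF le(1)] gt(1) nth_mem[of i xs]
      by (metis order.strict_trans2)
  qed
  with le gt 4 show ?case
    unfolding bf_loads_snoc small_bins_within_surplus_def
    by (intro small_bins_within_surplus_bf_step[unfolded small_bins_within_surplus_def]
        bf_loads_gt bf_loads_no_two_fit) auto
qed (auto simp: small_bins_within_surplus_def bf_loads_def nbins_le_def dest: list_all2_lengthD)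

theorem proposition7:
  fixes I I' :: "real list"
  assumes "length I' = length I"
    and "\<forall>i < length I. 1/3 < I ! i \<and> I ! i \<le> 1"
    and "\<forall>i < length I'. 0 < I' ! i \<and> I' ! i \<le> 1"
    and "\<forall>i < length I. I ! i \<le> I' ! i"
  shows "BF I \<le> BF I'"
proof -
  have "list_all2 (\<le>) I I'"
    using assms(1,4) by (simp add: list_all2_conv_all_nth)
  moreover have "\<forall>x\<in>set I. 1/3 < x"
    using assms(2) by (auto simp: in_set_conv_nth)
  ultimately show ?thesis
    using bf_loads_small_bins_within_surplus
    unfolding BF_def small_bins_within_surplus_def by blast
qed

end
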